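(* Let $\mathcal{I}$ be an independent configuration of $d$ doors in which all doors have the same fundamental distribution, and let $A_{\mathrm{simp}}=(1,2,\dots,d)^\infty$. Then $\mathbb{T}_{\mathcal{I}}(A_{\mathrm{simp}})=\Theta(\mathbb{T}_{\mathcal{I}})$, with universal constants.
   Context: Doors $1,\dots,d$ ($d\ge2$) are initially closed and stay open once opened. In an independent configuration with common fundamental distribution $p$, doors behave mutually independently and each door is still closed after $n$ knocks on it with probability $p(n)$ ($p(0)=1$, $p$ non-increasing, $\sum_n p(n)<\infty$). A knock sequence is an infinite sequence of door indices executed in order without any feedback; $\mathbb{T}_{\mathcal{I}}(\pi)$ is the expected number of knocks until all doors are open when running $\pi$, and $\mathbb{T}_{\mathcal{I}}=\inf_\pi\mathbb{T}_{\mathcal{I}}(\pi)$. $A_{\mathrm{simp}}$ is the sequence $1,2,\dots,d,1,2,\dots,d,\dots$. *)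

theory Defs
  imports "HOL-Analysis.Analysis"
begin

text \<open>Fundamental distribution: p(n) = probability a door is still closed after n knocks.\<close>
definition fundamental_distribution :: "(nat \<Rightarrow> real) \<Rightarrow> bool" where
  "fundamental_distribution p \<longleftrightarrow>
     p 0 = 1 \<and> (\<forall>n. 0 \<le> p n) \<and> antimono p \<and> summable p"

definition knock_seqs :: "nat \<Rightarrow> (nat \<Rightarrow> nat) set" where
  "knock_seqs d = {\<pi>. \<forall>s. \<pi> s \<in> {1..d}}"

definition knocks_on :: "(nat \<Rightarrow> nat) \<Rightarrow> nat \<Rightarrow> nat \<Rightarrow> nat" where
  "knocks_on \<pi> i t = card {s. s < t \<and> \<pi> s = i}"

text \<open>Probability that not all doors are open after the first t knocks
  (independent doors, common fundamental distribution p).\<close>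
definition not_all_open :: "nat \<Rightarrow> (nat \<Rightarrow> real) \<Rightarrow> (nat \<Rightarrow> nat) \<Rightarrow> nat \<Rightarrow> real" where
  "not_all_open d p \<pi> t = 1 - (\<Prod>i\<in>{1..d}. (1 - p (knocks_on \<pi> i t)))"

text \<open>Expected number of knocks until all doors are open: E[T] = sum_t P(T > t)
  (possibly infinite).\<close>
definition expected_time :: "nat \<Rightarrow> (nat \<Rightarrow> real) \<Rightarrow> (nat \<Rightarrow> nat) \<Rightarrow> ennreal" where
  "expected_time d p \<pi> = (\<Sum>t. ennreal (not_all_open d p \<pi> t))"

definition opt_time :: "nat \<Rightarrow> (nat \<Rightarrow> real) \<Rightarrow> ennreal" where
  "opt_time d p = (INF \<pi>\<in>knock_seqs d. expected_time d p \<pi>)"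

definition A_simp :: "nat \<Rightarrow> nat \<Rightarrow> nat" where
  "A_simp d t = t mod d + 1"

end

theory Submission
  imports Defs
begin

text \<open>
  Markov's inequality shows that after t knocks of any sequence at least half of the d doors
  have been knocked at most 2t/d times, so the probability that not all doors are open is
  at least 1 - (1 - p(2t/d))^{d/2}, which is at least half of 1 - (1 - p(2t/d))^d.
  Round-robin knocking gives every door t div d knocks, so its tail is at most
  1 - (1 - p(t/d))^d. Summing over t and comparing the time scales t and 2t costs another
  factor 2, whence the round-robin sequence is within a factor 4 of every knock sequence.
\<close>

lemma fundamental_distribution_nonneg: "fundamental_distribution p \<Longrightarrow> 0 \<le> p n"
  by (simp add: fundamental_distribution_def)

lemma fundamental_distribution_antimono:
  "fundamental_distribution p \<Longrightarrow> m \<le> n \<Longrightarrow> p n \<le> p m"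
  by (simp add: fundamental_distribution_def antimonoD)

lemma fundamental_distribution_le_one: "fundamental_distribution p \<Longrightarrow> p n \<le> 1"
  using fundamental_distribution_antimono[of p 0 n]
  by (simp add: fundamental_distribution_def)

lemma ennreal_le_mult_INF:
  fixes a :: ennreal and c :: real
  assumes "0 < c" and "\<And>x. x \<in> A \<Longrightarrow> a \<le> ennreal c * f x"
  shows "a \<le> ennreal c * (INF x\<in>A. f x)"
proof -
  have "a / ennreal c \<le> (INF x\<in>A. f x)"
    using assms by (intro INF_greatest divide_le_posI_ennreal) auto
  then have "ennreal c * (a / ennreal c) \<le> ennreal c * (INF x\<in>A. f x)"
    by (rule mult_left_mono) simp
  moreover have "ennreal c * (a / ennreal c) = a"
    using assms(1) by (simp add: ennreal_times_divide mult.commute mult_divide_eq_ennreal)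
  ultimately show ?thesis by simp
qed

lemma suminf_le_twice_even_ennreal:
  fixes a :: "nat \<Rightarrow> ennreal"
  assumes "antimono a"
  shows "(\<Sum>t. a t) \<le> 2 * (\<Sum>t. a (2 * t))"
proof (rule suminf_le_const)
  show "summable a" by (rule summableI)
  fix n
  have "(\<Sum>t<n. a t) \<le> (\<Sum>t<2 * n. a t)" by (rule sum_mono2) auto
  also have "\<dots> = (\<Sum>t<n. a (2 * t) + a (2 * t + 1))"
    by (induction n) (simp_all add: add.assoc)
  also have "\<dots> \<le> (\<Sum>t<n. 2 * a (2 * t))"
    using assms by (intro sum_mono) (simp add: antimonoD mult_2)
  also have "\<dots> \<le> 2 * (\<Sum>t. a (2 * t))"
    by (simp add: sum_distrib_left[symmetric] mult_left_mono sum_le_suminf summableI)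
  finally show "(\<Sum>t<n. a t) \<le> 2 * (\<Sum>t. a (2 * t))" .
qed

lemma card_above_twice_mean_le:
  fixes n :: "'a \<Rightarrow> nat"
  assumes "finite A" and "sum n A = t"
  shows "card {i\<in>A. 2 * t < card A * n i} \<le> card A div 2"
proof (cases "{i\<in>A. 2 * t < card A * n i} = {}")
  case False
  let ?B = "{i\<in>A. 2 * t < card A * n i}"
  have "2 * t * card ?B = (\<Sum>i\<in>?B. 2 * t)" by simp
  also have "\<dots> < (\<Sum>i\<in>?B. card A * n i)"
    using False assms(1) by (intro sum_strict_mono) auto
  also have "\<dots> \<le> card A * t"
    using assms by (auto simp: sum_distrib_left[symmetric] intro!: sum_mono2)
  finally have "(2 * card ?B) * t < card A * t" by (simp add: ac_simps)
  then have "2 * card ?B < card A" by (rule mult_less_cancel2[THEN iffD1, THEN conjunct2])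
  then show ?thesis by linarith
qed (simp only: card.empty)

lemma sum_knocks_on:
  assumes "\<pi> \<in> knock_seqs d"
  shows "(\<Sum>i\<in>{1..d}. knocks_on \<pi> i t) = t"
proof -
  have "{..<t} = (\<Union>i\<in>{1..d}. {s. s < t \<and> \<pi> s = i})"
    using assms by (auto simp: knock_seqs_def)
  then have "t = card (\<Union>i\<in>{1..d}. {s. s < t \<and> \<pi> s = i})" by (metis card_lessThan)
  also have "\<dots> = (\<Sum>i\<in>{1..d}. knocks_on \<pi> i t)"
    unfolding knocks_on_def by (rule card_UN_disjoint) auto
  finally show ?thesis by simp
qed

lemma one_minus_power_le_twice:
  fixes x :: real
  assumes "0 \<le> x" "x \<le> 1" "d \<le> 2 * h"
  shows "1 - x ^ d \<le> 2 * (1 - x ^ h)"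
proof -
  have "x ^ h \<le> 1" using assms by (simp add: power_le_one)
  have "x ^ h * x ^ h = x ^ (2 * h)" by (simp add: power_add mult_2)
  then have "1 - x ^ d \<le> 1 - x ^ h * x ^ h"
    using assms power_decreasing[of d "2 * h" x] by simp
  also have "\<dots> = (1 - x ^ h) * (1 + x ^ h)" by (simp add: algebra_simps)
  also have "\<dots> \<le> (1 - x ^ h) * 2"
    using \<open>x ^ h \<le> 1\<close> by (intro mult_left_mono) auto
  finally show ?thesis by simp
qed

definition balanced_not_all_open :: "nat \<Rightarrow> (nat \<Rightarrow> real) \<Rightarrow> nat \<Rightarrow> real" where
  "balanced_not_all_open d p n = 1 - (1 - p n) ^ d"

lemma balanced_not_all_open_antimono:
  assumes "fundamental_distribution p" "m \<le> n"
  shows "balanced_not_all_open d p n \<le> balanced_not_all_open d p m"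
  unfolding balanced_not_all_open_def
  using assms fundamental_distribution_antimono fundamental_distribution_le_one
  by (simp add: power_mono)

lemma knocks_on_A_simp_ge:
  assumes "i \<in> {1..d}"
  shows "t div d \<le> knocks_on (A_simp d) i t"
proof -
  obtain j where i: "i = Suc j" and "j < d"
    using assms by (cases i) auto
  let ?g = "\<lambda>k. k * d + j"
  have knocks: "?g ` {..<t div d} \<subseteq> {s. s < t \<and> A_simp d s = i}"
  proof safe
    fix k assume "k < t div d"
    then have "Suc k * d \<le> t"
      by (metis Suc_leI div_times_less_eq_dividend le_trans mult_le_mono1)
    then show "?g k < t" using \<open>j < d\<close> by simp
    show "A_simp d (?g k) = i"
      using \<open>j < d\<close> by (simp add: A_simp_def i)
  qed
  have "inj_on ?g {..<t div d}"
    using \<open>j < d\<close> by (intro inj_onI) simp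
  then have "t div d = card (?g ` {..<t div d})"
    by (simp add: card_image)
  also have "\<dots> \<le> knocks_on (A_simp d) i t"
    unfolding knocks_on_def using knocks by (intro card_mono) simp_all
  finally show ?thesis .
qed

lemma not_all_open_A_simp_le:
  assumes "fundamental_distribution p"
  shows "not_all_open d p (A_simp d) t \<le> balanced_not_all_open d p (t div d)"
proof -
  have "(\<Prod>i\<in>{1..d}. 1 - p (t div d)) \<le> (\<Prod>i\<in>{1..d}. 1 - p (knocks_on (A_simp d) i t))"
    using assms knocks_on_A_simp_ge fundamental_distribution_antimono
      fundamental_distribution_le_one
    by (intro prod_mono) force
  then show ?thesis by (simp add: not_all_open_def balanced_not_all_open_def)
qed

lemma not_all_open_ge:
  assumes fd: "fundamental_distribution p" and \<pi>: "\<pi> \<in> knock_seqs d"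
  shows "balanced_not_all_open d p (2 * t div d) \<le> 2 * not_all_open d p \<pi> t"
proof -
  let ?q = "\<lambda>n. 1 - p n"
  let ?m = "2 * t div d"
  let ?heavy = "{i\<in>{1..d}. 2 * t < d * knocks_on \<pi> i t}"
  let ?light = "{1..d} - ?heavy"
  have q: "0 \<le> ?q n" "?q n \<le> 1" for n
    using fd fundamental_distribution_nonneg fundamental_distribution_le_one by auto
  have "card ?heavy \<le> d div 2"
    using card_above_twice_mean_le[of "{1..d}" "\<lambda>i. knocks_on \<pi> i t"] sum_knocks_on[OF \<pi>]
    by simp
  moreover have "card ?light = d - card ?heavy"
    by (subst card_Diff_subset) auto
  ultimately have card_light: "d \<le> 2 * card ?light"
    by linarith
  have "(\<Prod>i\<in>{1..d}. ?q (knocks_on \<pi> i t))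
      = (\<Prod>i\<in>?light. ?q (knocks_on \<pi> i t)) * (\<Prod>i\<in>?heavy. ?q (knocks_on \<pi> i t))"
    by (rule prod.subset_diff) auto
  also have "\<dots> \<le> (\<Prod>i\<in>?light. ?q (knocks_on \<pi> i t))"
    using q by (intro mult_left_le prod_le_1 prod_nonneg) auto
  also have "\<dots> \<le> (\<Prod>i\<in>?light. ?q ?m)"
  proof (rule prod_mono)
    fix i assume "i \<in> ?light"
    then have "knocks_on \<pi> i t * d \<le> 2 * t" "0 < d"
      by (auto simp: mult.commute)
    then have "knocks_on \<pi> i t \<le> ?m"
      by (simp add: less_eq_div_iff_mult_less_eq)
    then show "0 \<le> ?q (knocks_on \<pi> i t) \<and> ?q (knocks_on \<pi> i t) \<le> ?q ?m"
      using fd fundamental_distribution_antimono q by force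
  qed
  finally have "(\<Prod>i\<in>{1..d}. ?q (knocks_on \<pi> i t)) \<le> ?q ?m ^ card ?light" by simp
  moreover have "1 - ?q ?m ^ d \<le> 2 * (1 - ?q ?m ^ card ?light)"
    using q card_light by (rule one_minus_power_le_twice)
  ultimately show ?thesis
    by (simp add: not_all_open_def balanced_not_all_open_def)
qed

lemma expected_time_A_simp_le:
  assumes fd: "fundamental_distribution p" and \<pi>: "\<pi> \<in> knock_seqs d"
  shows "expected_time d p (A_simp d) \<le> 4 * expected_time d p \<pi>"
proof -
  let ?a = "\<lambda>t. ennreal (balanced_not_all_open d p (t div d))"
  have "antimono ?a"
    using fd by (intro antimonoI ennreal_leI balanced_not_all_open_antimono div_le_mono)
  have "expected_time d p (A_simp d) \<le> (\<Sum>t. ?a t)"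
    unfolding expected_time_def
    using fd by (intro suminf_le ennreal_leI not_all_open_A_simp_le) auto
  also have "\<dots> \<le> 2 * (\<Sum>t. ?a (2 * t))"
    using \<open>antimono ?a\<close> by (rule suminf_le_twice_even_ennreal)
  also have "\<dots> \<le> 2 * (\<Sum>t. 2 * ennreal (not_all_open d p \<pi> t))"
  proof (intro mult_left_mono suminf_le)
    fix t
    have "?a (2 * t) \<le> ennreal (2 * not_all_open d p \<pi> t)"
      using not_all_open_ge[OF fd \<pi>] by (rule ennreal_leI)
    then show "?a (2 * t) \<le> 2 * ennreal (not_all_open d p \<pi> t)"
      by (simp add: ennreal_mult')
  qed auto
  also have "\<dots> = 4 * expected_time d p \<pi>"
    by (simp add: expected_time_def ennreal_suminf_cmult mult.assoc[symmetric])
  finally show ?thesis .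
qed

theorem mainTheorem4:
  "\<exists>c C :: real. 0 < c \<and> 0 < C \<and>
     (\<forall>d p. 2 \<le> d \<longrightarrow> fundamental_distribution p \<longrightarrow>
        ennreal c * opt_time d p \<le> expected_time d p (A_simp d) \<and>
        expected_time d p (A_simp d) \<le> ennreal C * opt_time d p)"
proof (intro exI conjI allI impI)
  fix d :: nat and p assume "2 \<le> d" and fd: "fundamental_distribution p"
  then have "A_simp d \<in> knock_seqs d"
    by (auto simp: knock_seqs_def A_simp_def Suc_le_eq)
  then show "ennreal 1 * opt_time d p \<le> expected_time d p (A_simp d)"
    unfolding opt_time_def by (simp add: INF_lower)
  show "expected_time d p (A_simp d) \<le> ennreal 4 * opt_time d p"
    unfolding opt_time_def
    using fd expected_time_A_simp_le by (intro ennreal_le_mult_INF) auto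
qed simp_all

end
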